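(* Let $D_+\to\mathcal E\xrightarrow{q}\mathcal C$ be a linear extension of a small category $\mathcal C$ by a natural system $D$, and let $(\mathcal C,S)$ be a quasi-schemoid. Assume that for every morphism $f$ of $\mathcal C$ the homomorphisms $f_*$ and $f^*$ are invertible, and that $D_{1_{s(f)}}\cong D_{1_{s(g)}}$ whenever $f,g$ lie in a common block $\sigma\in S$. Then $\mathcal E$ admits a unique quasi-schemoid structure $\widetilde S$ such that $q:(\mathcal E,\widetilde S)\to(\mathcal C,S)$ is a morphism of quasi-schemoids and the induced map $\widetilde S\to S$ (sending a block to the block containing its image) is injective; namely $\widetilde S=\{q^{-1}(\sigma)\}_{\sigma\in S}$.
   Context: Write $s(f),t(f)$ for source and target. A quasi-schemoid is a pair $(\mathcal C,S)$ with $\mathcal C$ a small category and $S$ a partition of $mor(\mathcal C)$ into nonempty blocks such that for all $\sigma,\tau,\mu\in S$ and $f,g\in\mu$ the sets $\{(a,b)\in\sigma\times\tau: s(a)=t(b), a\circ b=f\}$ and the analogous set for $g$ have equal cardinality. A morphism of quasi-schemoids is a functor mapping each block into some block. The category of factorizations $F(\mathcal C)$ has objects the morphisms of $\mathcal C$ and morphisms $f\to g$ the pairs $(\alpha,\beta)$ with $g=\alpha f\beta$, composition $(\alpha',\beta')(\alpha,\beta)=(\alpha'\alpha,\beta\beta')$. A natural system is a functor $D:F(\mathcal C)\to\mathbb K\text{-Mod}$, $f\mapsto D_f$; for composable $f,g$ put $f_*=D(f,1):D_g\to D_{fg}$ and $g^*=D(1,g):D_f\to D_{fg}$. A linear extension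 $D_+\to\mathcal E\xrightarrow{q}\mathcal C$ (Baues–Wirsching) consists of a category $\mathcal E$ with the same objects and a full functor $q$ that is the identity on objects, such that for each morphism $f$ of $\mathcal C$ the abelian group $D_f$ acts transitively and freely on $q^{-1}(f)$ (written $f_0+\alpha$), and $(f_0+\alpha)(g_0+\beta)=f_0g_0+f_*\beta+g^*\alpha$. *)

theory Defs
  imports "HOL-Algebra.Module" "HOL-Library.Disjoint_Sets" "HOL-Library.Equipollence"
begin

record ('o, 'm) cat =
  Obj  :: "'o set"
  Mor  :: "'m set"
  Dom  :: "'m \<Rightarrow> 'o"
  Cod  :: "'m \<Rightarrow> 'o"
  Id   :: "'o \<Rightarrow> 'm"
  Comp :: "'m \<Rightarrow> 'm \<Rightarrow> 'm"

definition is_category :: "('o, 'm) cat \<Rightarrow> bool" where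
  "is_category C \<longleftrightarrow>
     (\<forall>f\<in>Mor C. Dom C f \<in> Obj C \<and> Cod C f \<in> Obj C) \<and>
     (\<forall>x\<in>Obj C. Id C x \<in> Mor C \<and> Dom C (Id C x) = x \<and> Cod C (Id C x) = x) \<and>
     (\<forall>f\<in>Mor C. \<forall>g\<in>Mor C. Dom C g = Cod C f \<longrightarrow>
        Comp C g f \<in> Mor C \<and> Dom C (Comp C g f) = Dom C f \<and> Cod C (Comp C g f) = Cod C g) \<and>
     (\<forall>f\<in>Mor C. \<forall>g\<in>Mor C. \<forall>h\<in>Mor C. Dom C h = Cod C g \<longrightarrow> Dom C g = Cod C f \<longrightarrow>
        Comp C h (Comp C g f) = Comp C (Comp C h g) f) \<and>
     (\<forall>f\<in>Mor C. Comp C (Id C (Cod C f)) f = f \<and> Comp C f (Id C (Dom C f)) = f)"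

definition factor_pairs :: "('o, 'm) cat \<Rightarrow> 'm set \<Rightarrow> 'm set \<Rightarrow> 'm \<Rightarrow> ('m \<times> 'm) set" where
  "factor_pairs C \<sigma> \<tau> f = {(a, b). a \<in> \<sigma> \<and> b \<in> \<tau> \<and> Dom C a = Cod C b \<and> Comp C a b = f}"

definition quasi_schemoid :: "('o, 'm) cat \<Rightarrow> 'm set set \<Rightarrow> bool" where
  "quasi_schemoid C S \<longleftrightarrow> is_category C \<and> partition_on (Mor C) S \<and>
     (\<forall>\<sigma>\<in>S. \<forall>\<tau>\<in>S. \<forall>\<mu>\<in>S. \<forall>f\<in>\<mu>. \<forall>g\<in>\<mu>.
        factor_pairs C \<sigma> \<tau> f \<approx> factor_pairs C \<sigma> \<tau> g)"

definition id_on_obj_functor :: "('o, 'e) cat \<Rightarrow> ('o, 'm) cat \<Rightarrow> ('e \<Rightarrow> 'm) \<Rightarrow> bool" where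
  "id_on_obj_functor E C F \<longleftrightarrow> Obj E = Obj C \<and>
     (\<forall>e\<in>Mor E. F e \<in> Mor C \<and> Dom C (F e) = Dom E e \<and> Cod C (F e) = Cod E e) \<and>
     (\<forall>x\<in>Obj E. F (Id E x) = Id C x) \<and>
     (\<forall>e\<in>Mor E. \<forall>e'\<in>Mor E. Dom E e = Cod E e' \<longrightarrow> F (Comp E e e') = Comp C (F e) (F e'))"

definition full_functor :: "('o, 'e) cat \<Rightarrow> ('o, 'm) cat \<Rightarrow> ('e \<Rightarrow> 'm) \<Rightarrow> bool" where
  "full_functor E C F \<longleftrightarrow> (\<forall>f\<in>Mor C. \<exists>e\<in>Mor E. Dom E e = Dom C f \<and> Cod E e = Cod C f \<and> F e = f)"

definition qs_morphism ::
  "('o, 'e) cat \<Rightarrow> 'e set set \<Rightarrow> ('o, 'm) cat \<Rightarrow> 'm set set \<Rightarrow> ('e \<Rightarrow> 'm) \<Rightarrow> bool" where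
  "qs_morphism E S' C S F \<longleftrightarrow> quasi_schemoid E S' \<and> quasi_schemoid C S \<and>
     id_on_obj_functor E C F \<and> (\<forall>\<tau>\<in>S'. \<exists>\<sigma>\<in>S. F ` \<tau> \<subseteq> \<sigma>)"

definition induced_block_map :: "'m set set \<Rightarrow> ('e \<Rightarrow> 'm) \<Rightarrow> 'e set \<Rightarrow> 'm set" where
  "induced_block_map S F \<tau> = (THE \<sigma>. \<sigma> \<in> S \<and> F ` \<tau> \<subseteq> \<sigma>)"

definition module_hom :: "('k, 'c) ring_scheme \<Rightarrow> ('k, 'v, 'a) module_scheme \<Rightarrow>
     ('k, 'v, 'b) module_scheme \<Rightarrow> ('v \<Rightarrow> 'v) set" where
  "module_hom R M N = {h. (\<forall>x\<in>carrier M. h x \<in> carrier N) \<and>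
     (\<forall>x\<in>carrier M. \<forall>y\<in>carrier M. h (x \<oplus>\<^bsub>M\<^esub> y) = h x \<oplus>\<^bsub>N\<^esub> h y) \<and>
     (\<forall>a\<in>carrier R. \<forall>x\<in>carrier M. h (a \<odot>\<^bsub>M\<^esub> x) = a \<odot>\<^bsub>N\<^esub> h x)}"

definition module_iso :: "('k, 'c) ring_scheme \<Rightarrow> ('k, 'v, 'a) module_scheme \<Rightarrow>
     ('k, 'v, 'b) module_scheme \<Rightarrow> ('v \<Rightarrow> 'v) set" where
  "module_iso R M N = {h. h \<in> module_hom R M N \<and> bij_betw h (carrier M) (carrier N)}"

definition is_module_iso :: "('k, 'c) ring_scheme \<Rightarrow> ('k, 'v, 'a) module_scheme \<Rightarrow>
     ('k, 'v, 'b) module_scheme \<Rightarrow> bool" where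
  "is_module_iso R M N \<longleftrightarrow> module_iso R M N \<noteq> {}"

text \<open>A natural system on C with values in R-modules: a functor from the category of
  factorizations F(C). DM f is the module D_f; DMap a f b is D(a,b) : D_f -> D_(a f b),
  for the morphism (a,b) : f -> a o f o b of F(C).\<close>

definition natural_system :: "('o, 'm) cat \<Rightarrow> ('k, 'c) ring_scheme \<Rightarrow>
     ('m \<Rightarrow> ('k, 'v) module) \<Rightarrow> ('m \<Rightarrow> 'm \<Rightarrow> 'm \<Rightarrow> 'v \<Rightarrow> 'v) \<Rightarrow> bool" where
  "natural_system C R DM DMap \<longleftrightarrow>
     (\<forall>f\<in>Mor C. module R (DM f)) \<and>
     (\<forall>f\<in>Mor C. \<forall>a\<in>Mor C. \<forall>b\<in>Mor C. Dom C a = Cod C f \<longrightarrow> Cod C b = Dom C f \<longrightarrow>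
        DMap a f b \<in> module_hom R (DM f) (DM (Comp C (Comp C a f) b))) \<and>
     (\<forall>f\<in>Mor C. \<forall>x\<in>carrier (DM f). DMap (Id C (Cod C f)) f (Id C (Dom C f)) x = x) \<and>
     (\<forall>f\<in>Mor C. \<forall>a\<in>Mor C. \<forall>b\<in>Mor C. \<forall>a'\<in>Mor C. \<forall>b'\<in>Mor C.
        Dom C a = Cod C f \<longrightarrow> Cod C b = Dom C f \<longrightarrow> Dom C a' = Cod C a \<longrightarrow> Cod C b' = Dom C b \<longrightarrow>
        (\<forall>x\<in>carrier (DM f).
           DMap a' (Comp C (Comp C a f) b) b' (DMap a f b x) = DMap (Comp C a' a) f (Comp C b b') x))"

text \<open>f_* = D(f,1) : D_g -> D_(fg) and g^* = D(1,g) : D_f -> D_(fg).\<close>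

definition lower_star :: "('o, 'm) cat \<Rightarrow> ('m \<Rightarrow> 'm \<Rightarrow> 'm \<Rightarrow> 'v \<Rightarrow> 'v) \<Rightarrow> 'm \<Rightarrow> 'm \<Rightarrow> 'v \<Rightarrow> 'v" where
  "lower_star C DMap f g = DMap f g (Id C (Dom C g))"

definition upper_star :: "('o, 'm) cat \<Rightarrow> ('m \<Rightarrow> 'm \<Rightarrow> 'm \<Rightarrow> 'v \<Rightarrow> 'v) \<Rightarrow> 'm \<Rightarrow> 'm \<Rightarrow> 'v \<Rightarrow> 'v" where
  "upper_star C DMap g f = DMap (Id C (Cod C f)) f g"

text \<open>D_+ -> E -q-> C. act f a e is the element e + a of the fibre q^{-1}(f), for a in D_f.\<close>

definition linear_extension :: "('o, 'm) cat \<Rightarrow> ('k, 'c) ring_scheme \<Rightarrow>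
     ('m \<Rightarrow> ('k, 'v) module) \<Rightarrow> ('m \<Rightarrow> 'm \<Rightarrow> 'm \<Rightarrow> 'v \<Rightarrow> 'v) \<Rightarrow>
     ('o, 'e) cat \<Rightarrow> ('e \<Rightarrow> 'm) \<Rightarrow> ('m \<Rightarrow> 'v \<Rightarrow> 'e \<Rightarrow> 'e) \<Rightarrow> bool" where
  "linear_extension C R DM DMap E q act \<longleftrightarrow>
     is_category C \<and> is_category E \<and> natural_system C R DM DMap \<and>
     id_on_obj_functor E C q \<and> full_functor E C q \<and>
     (\<forall>f\<in>Mor C. \<forall>e\<in>Mor E. q e = f \<longrightarrow>
        (\<forall>a\<in>carrier (DM f). act f a e \<in> Mor E \<and> q (act f a e) = f) \<and>
        act f \<zero>\<^bsub>DM f\<^esub> e = e \<and>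
        (\<forall>a\<in>carrier (DM f). \<forall>b\<in>carrier (DM f). act f (a \<oplus>\<^bsub>DM f\<^esub> b) e = act f a (act f b e)) \<and>
        (\<forall>e'\<in>Mor E. q e' = f \<longrightarrow> (\<exists>!a. a \<in> carrier (DM f) \<and> act f a e = e'))) \<and>
     (\<forall>f\<in>Mor C. \<forall>g\<in>Mor C. Dom C f = Cod C g \<longrightarrow>
        (\<forall>f0\<in>Mor E. \<forall>g0\<in>Mor E. q f0 = f \<longrightarrow> q g0 = g \<longrightarrow>
          (\<forall>a\<in>carrier (DM f). \<forall>b\<in>carrier (DM g).
             Comp E (act f a f0) (act g b g0) =
             act (Comp C f g)
               (lower_star C DMap f g b \<oplus>\<^bsub>DM (Comp C f g)\<^esub> upper_star C DMap g f a)
               (Comp E f0 g0))))"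

end

theory Submission
  imports Defs
begin

text \<open>Over a factorization x y = q e in C, a factorization a b = e in E is determined by its
  left factor a, which may be any element of the fibre of q over x: because x_* is bijective,
  the right factor exists and is unique. So the factorizations of e through the preimages of
  \<sigma> and \<tau> correspond to pairs of a factorization (x, y) of q e through \<sigma> and \<tau> and an
  element of D_x. Via x_* : D_(1_s(x)) \<cong> D_x, the size of D_x is constant on blocks, so the
  counting condition of S transfers to the preimage partition. Uniqueness is a fact about
  partitions: a partition whose blocks map into blocks of S, with injective induced map on
  blocks, must be the preimage partition.\<close>

definition vimage_blocks :: "('a \<Rightarrow> 'b) \<Rightarrow> 'a set \<Rightarrow> 'b set set \<Rightarrow> 'a set set" where
  "vimage_blocks f A S = {{x \<in> A. f x \<in> \<sigma>} | \<sigma>. \<sigma> \<in> S}"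

lemma partition_on_block_eq:
  "partition_on A P \<Longrightarrow> X \<in> P \<Longrightarrow> Y \<in> P \<Longrightarrow> x \<in> X \<Longrightarrow> x \<in> Y \<Longrightarrow> X = Y"
  unfolding partition_on_def disjoint_def by blast

lemma vimage_block_nonempty:
  assumes S: "partition_on B S" and f: "f ` A = B" and "\<sigma> \<in> S"
  obtains x where "x \<in> A" "f x \<in> \<sigma>"
proof -
  obtain y where y: "y \<in> \<sigma>" using partition_onD3[OF S] \<open>\<sigma> \<in> S\<close> by (metis ex_in_conv)
  then have "y \<in> f ` A" using f partition_onD1[OF S] \<open>\<sigma> \<in> S\<close> by auto
  then show ?thesis using y that by auto
qed

lemma partition_on_vimage_blocks:
  assumes S: "partition_on B S" and f: "f ` A = B"
  shows "partition_on A (vimage_blocks f A S)"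
proof (rule partition_onI)
  show "\<Union>(vimage_blocks f A S) = A"
  proof
    show "\<Union>(vimage_blocks f A S) \<subseteq> A" unfolding vimage_blocks_def by auto
    show "A \<subseteq> \<Union>(vimage_blocks f A S)"
    proof
      fix x assume "x \<in> A"
      then have "f x \<in> \<Union>S" using f partition_onD1[OF S] by auto
      then obtain \<sigma> where "\<sigma> \<in> S" "f x \<in> \<sigma>" by auto
      then show "x \<in> \<Union>(vimage_blocks f A S)" using \<open>x \<in> A\<close> unfolding vimage_blocks_def by auto
    qed
  qed
  show "disjnt X Y" if XY: "X \<in> vimage_blocks f A S" "Y \<in> vimage_blocks f A S" "X \<noteq> Y" for X Y
  proof -
    obtain \<sigma> \<sigma>' where \<sigma>: "\<sigma> \<in> S" "X = {x \<in> A. f x \<in> \<sigma>}" and \<sigma>': "\<sigma>' \<in> S" "Y = {x \<in> A. f x \<in> \<sigma>'}"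
      using XY(1,2) unfolding vimage_blocks_def by auto
    have "\<sigma> \<noteq> \<sigma>'" using \<sigma> \<sigma>' \<open>X \<noteq> Y\<close> by auto
    then show ?thesis using partition_on_block_eq[OF S \<sigma>(1) \<sigma>'(1)] \<sigma>(2) \<sigma>'(2)
      unfolding disjnt_def by auto
  qed
  show "{} \<notin> vimage_blocks f A S"
    using vimage_block_nonempty[OF S f] unfolding vimage_blocks_def by force
qed

lemma induced_block_map_eqI:
  assumes S: "partition_on B S" and \<sigma>: "\<sigma> \<in> S" and "\<tau> \<noteq> {}" and \<tau>: "f ` \<tau> \<subseteq> \<sigma>"
  shows "induced_block_map S f \<tau> = \<sigma>"
  unfolding induced_block_map_def
proof (rule the_equality)
  show "\<sigma> \<in> S \<and> f ` \<tau> \<subseteq> \<sigma>" using \<sigma> \<tau> by simp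
  fix \<sigma>' assume \<sigma>': "\<sigma>' \<in> S \<and> f ` \<tau> \<subseteq> \<sigma>'"
  obtain x where "x \<in> \<tau>" using \<open>\<tau> \<noteq> {}\<close> by auto
  then show "\<sigma>' = \<sigma>" using partition_on_block_eq[OF S _ \<sigma>, of \<sigma>' "f x"] \<sigma>' \<tau> by auto
qed

lemma induced_block_map_vimage_blocks:
  assumes S: "partition_on B S" and f: "f ` A = B" and "\<sigma> \<in> S"
  shows "induced_block_map S f {x \<in> A. f x \<in> \<sigma>} = \<sigma>"
proof (rule induced_block_map_eqI[OF S \<open>\<sigma> \<in> S\<close>])
  show "{x \<in> A. f x \<in> \<sigma>} \<noteq> {}" using vimage_block_nonempty[OF assms] by auto
qed auto

lemma inj_on_induced_block_map_vimage_blocks: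
  assumes "partition_on B S" and "f ` A = B"
  shows "inj_on (induced_block_map S f) (vimage_blocks f A S)"
proof (rule inj_onI)
  fix X Y assume "X \<in> vimage_blocks f A S" "Y \<in> vimage_blocks f A S"
    and eq: "induced_block_map S f X = induced_block_map S f Y"
  then obtain \<sigma> \<sigma>' where "\<sigma> \<in> S" "X = {x \<in> A. f x \<in> \<sigma>}" "\<sigma>' \<in> S" "Y = {x \<in> A. f x \<in> \<sigma>'}"
    unfolding vimage_blocks_def by auto
  with eq show "X = Y" using induced_block_map_vimage_blocks[OF assms] by simp
qed

lemma vimage_block_eqI:
  assumes S: "partition_on B S" and S': "partition_on A S'"
    and into: "\<forall>\<tau>\<in>S'. \<exists>\<sigma>\<in>S. f ` \<tau> \<subseteq> \<sigma>" and inj: "inj_on (induced_block_map S f) S'"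
    and \<tau>: "\<tau> \<in> S'" and \<sigma>: "\<sigma> \<in> S" "f ` \<tau> \<subseteq> \<sigma>"
  shows "\<tau> = {x \<in> A. f x \<in> \<sigma>}"
proof
  have A: "A = \<Union>S'" and nonempty: "{} \<notin> S'" using S' by (simp_all add: partition_on_def)
  show "\<tau> \<subseteq> {x \<in> A. f x \<in> \<sigma>}" using \<tau> \<sigma>(2) A by auto
  show "{x \<in> A. f x \<in> \<sigma>} \<subseteq> \<tau>"
  proof
    fix x assume x: "x \<in> {x \<in> A. f x \<in> \<sigma>}"
    then obtain \<tau>' where \<tau>': "\<tau>' \<in> S'" "x \<in> \<tau>'" using A by auto
    then obtain \<sigma>' where \<sigma>': "\<sigma>' \<in> S" "f ` \<tau>' \<subseteq> \<sigma>'" using into by blast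
    have "f x \<in> \<sigma>'" using \<tau>'(2) \<sigma>'(2) by auto
    then have "\<sigma>' = \<sigma>" using partition_on_block_eq[OF S \<sigma>'(1) \<sigma>(1)] x by simp
    have "\<tau> \<noteq> {}" "\<tau>' \<noteq> {}" using \<tau> \<tau>'(1) nonempty by auto
    then have "induced_block_map S f \<tau>' = induced_block_map S f \<tau>"
      using induced_block_map_eqI[OF S \<sigma>(1) \<open>\<tau> \<noteq> {}\<close> \<sigma>(2)]
        induced_block_map_eqI[OF S \<sigma>(1) \<open>\<tau>' \<noteq> {}\<close>] \<sigma>'(2) \<open>\<sigma>' = \<sigma>\<close> by simp
    then have "\<tau>' = \<tau>" using inj_onD[OF inj _ \<tau>'(1) \<tau>] by simp
    then show "x \<in> \<tau>" using \<tau>'(2) by simp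
  qed
qed

lemma vimage_blocks_unique:
  assumes S: "partition_on B S" and f: "f ` A = B" and S': "partition_on A S'"
    and into: "\<forall>\<tau>\<in>S'. \<exists>\<sigma>\<in>S. f ` \<tau> \<subseteq> \<sigma>" and inj: "inj_on (induced_block_map S f) S'"
  shows "S' = vimage_blocks f A S"
proof
  note block_eq = vimage_block_eqI[OF S S' into inj]
  show "S' \<subseteq> vimage_blocks f A S"
  proof
    fix \<tau> assume "\<tau> \<in> S'"
    then obtain \<sigma> where "\<sigma> \<in> S" "f ` \<tau> \<subseteq> \<sigma>" using into by blast
    then show "\<tau> \<in> vimage_blocks f A S"
      using block_eq[OF \<open>\<tau> \<in> S'\<close>] unfolding vimage_blocks_def by blast
  qed
  show "vimage_blocks f A S \<subseteq> S'"
  proof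
    fix X assume "X \<in> vimage_blocks f A S"
    then obtain \<sigma> where \<sigma>: "\<sigma> \<in> S" "X = {x \<in> A. f x \<in> \<sigma>}" unfolding vimage_blocks_def by blast
    obtain x where x: "x \<in> A" "f x \<in> \<sigma>" using vimage_block_nonempty[OF S f \<sigma>(1)] .
    then obtain \<tau> where \<tau>: "\<tau> \<in> S'" "x \<in> \<tau>" using partition_onD1[OF S'] by auto
    then obtain \<sigma>' where \<sigma>': "\<sigma>' \<in> S" "f ` \<tau> \<subseteq> \<sigma>'" using into by blast
    have "f x \<in> \<sigma>'" using \<tau>(2) \<sigma>'(2) by auto
    then have "\<sigma>' = \<sigma>" using partition_on_block_eq[OF S \<sigma>'(1) \<sigma>(1)] x by simp
    then show "X \<in> S'" using block_eq[OF \<tau>(1) \<sigma>'] \<tau>(1) \<sigma>(2) by simp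
  qed
qed

lemma module_hom_zero:
  assumes "module R M" "module R N" "h \<in> module_hom R M N"
  shows "h \<zero>\<^bsub>M\<^esub> = \<zero>\<^bsub>N\<^esub>"
proof -
  interpret M: module R M by fact
  interpret N: module R N by fact
  have closed: "h \<zero>\<^bsub>M\<^esub> \<in> carrier N" using assms(3) M.zero_closed by (simp add: module_hom_def)
  have "h \<zero>\<^bsub>M\<^esub> \<oplus>\<^bsub>N\<^esub> h \<zero>\<^bsub>M\<^esub> = h (\<zero>\<^bsub>M\<^esub> \<oplus>\<^bsub>M\<^esub> \<zero>\<^bsub>M\<^esub>)"
    using assms(3) M.zero_closed unfolding module_hom_def by (simp only: mem_Collect_eq)
  also have "\<dots> = \<zero>\<^bsub>N\<^esub> \<oplus>\<^bsub>N\<^esub> h \<zero>\<^bsub>M\<^esub>" using closed by simp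
  finally have "h \<zero>\<^bsub>M\<^esub> \<oplus>\<^bsub>N\<^esub> h \<zero>\<^bsub>M\<^esub> = \<zero>\<^bsub>N\<^esub> \<oplus>\<^bsub>N\<^esub> h \<zero>\<^bsub>M\<^esub>" .
  then show ?thesis by (simp only: N.add.right_cancel[OF closed closed N.zero_closed])
qed

lemma module_iso_eqpoll: "h \<in> module_iso R M N \<Longrightarrow> carrier M \<approx> carrier N"
  unfolding module_iso_def eqpoll_def by blast

locale linear_extension_bij_lower =
  fixes C :: "('o, 'm) cat" and E :: "('o, 'e) cat"
    and R :: "('k, 'c) ring_scheme"
    and DM :: "'m \<Rightarrow> ('k, 'v) module" and DMap :: "'m \<Rightarrow> 'm \<Rightarrow> 'm \<Rightarrow> 'v \<Rightarrow> 'v"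
    and q :: "'e \<Rightarrow> 'm" and act :: "'m \<Rightarrow> 'v \<Rightarrow> 'e \<Rightarrow> 'e"
  assumes ext: "linear_extension C R DM DMap E q act"
    and lower_star_bij: "\<And>f g. f \<in> Mor C \<Longrightarrow> g \<in> Mor C \<Longrightarrow> Dom C f = Cod C g \<Longrightarrow>
        bij_betw (lower_star C DMap f g) (carrier (DM g)) (carrier (DM (Comp C f g)))"
begin

lemma category_C: "is_category C"
  and category_E: "is_category E"
  and natural_DM: "natural_system C R DM DMap"
  and functor_q: "id_on_obj_functor E C q"
  and full_q: "full_functor E C q"
  using ext unfolding linear_extension_def by blast+

lemma module_DM: "f \<in> Mor C \<Longrightarrow> module R (DM f)"
  using natural_DM unfolding natural_system_def by blast

lemma Comp_C_closed: "f \<in> Mor C \<Longrightarrow> g \<in> Mor C \<Longrightarrow> Dom C f = Cod C g \<Longrightarrow> Comp C f g \<in> Mor C"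
  using category_C unfolding is_category_def by blast

lemma q_Mor: "e \<in> Mor E \<Longrightarrow> q e \<in> Mor C \<and> Dom C (q e) = Dom E e \<and> Cod C (q e) = Cod E e"
  using functor_q unfolding id_on_obj_functor_def by blast

lemma q_Comp:
  "e \<in> Mor E \<Longrightarrow> e' \<in> Mor E \<Longrightarrow> Dom E e = Cod E e' \<Longrightarrow> q (Comp E e e') = Comp C (q e) (q e')"
  using functor_q unfolding id_on_obj_functor_def by blast

lemma Comp_E_closed: "e \<in> Mor E \<Longrightarrow> e' \<in> Mor E \<Longrightarrow> Dom E e = Cod E e' \<Longrightarrow> Comp E e e' \<in> Mor E"
  using category_E unfolding is_category_def by blast

lemma q_image: "q ` Mor E = Mor C"
  using full_q q_Mor unfolding full_functor_def by force

definition fibre :: "'m \<Rightarrow> 'e set" where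
  "fibre x = {e \<in> Mor E. q e = x}"

lemma fibre_nonempty: "x \<in> Mor C \<Longrightarrow> \<exists>e. e \<in> fibre x"
  using q_image unfolding fibre_def by force

lemma fibre_Mor: "e \<in> fibre x \<Longrightarrow> e \<in> Mor E \<and> x \<in> Mor C"
  using q_Mor unfolding fibre_def by blast

lemma Comp_fibre:
  assumes "a \<in> fibre x" "b \<in> fibre y" "Dom C x = Cod C y"
  shows "Dom E a = Cod E b" "Comp E a b \<in> fibre (Comp C x y)"
proof -
  show "Dom E a = Cod E b" using assms q_Mor unfolding fibre_def by auto
  then show "Comp E a b \<in> fibre (Comp C x y)"
    using assms Comp_E_closed q_Comp unfolding fibre_def by auto
qed

lemma act_fibre: "e \<in> fibre x \<Longrightarrow> \<alpha> \<in> carrier (DM x) \<Longrightarrow> act x \<alpha> e \<in> fibre x"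
  using ext fibre_Mor unfolding linear_extension_def fibre_def by blast

lemma act_zero: "e \<in> fibre x \<Longrightarrow> act x \<zero>\<^bsub>DM x\<^esub> e = e"
  using ext fibre_Mor unfolding linear_extension_def fibre_def by blast

lemma act_simply_transitive:
  "e \<in> fibre x \<Longrightarrow> e' \<in> fibre x \<Longrightarrow> \<exists>!\<alpha>. \<alpha> \<in> carrier (DM x) \<and> act x \<alpha> e = e'"
  using ext fibre_Mor unfolding linear_extension_def fibre_def by blast

lemma act_transitive:
  assumes "e \<in> fibre x" "e' \<in> fibre x"
  obtains \<alpha> where "\<alpha> \<in> carrier (DM x)" "act x \<alpha> e = e'"
  using ex1_implies_ex[OF act_simply_transitive[OF assms]] that by blast

lemma act_inj:
  assumes e: "e \<in> fibre x" and \<alpha>: "\<alpha> \<in> carrier (DM x)" and \<alpha>': "\<alpha>' \<in> carrier (DM x)"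
    and eq: "act x \<alpha> e = act x \<alpha>' e"
  shows "\<alpha> = \<alpha>'"
proof -
  note ex1 = act_simply_transitive[OF e act_fibre[OF e \<alpha>]]
  have "(THE \<gamma>. \<gamma> \<in> carrier (DM x) \<and> act x \<gamma> e = act x \<alpha> e) = \<alpha>"
    using \<alpha> by (intro the1_equality[OF ex1]) simp
  moreover have "(THE \<gamma>. \<gamma> \<in> carrier (DM x) \<and> act x \<gamma> e = act x \<alpha> e) = \<alpha>'"
    using \<alpha>' eq by (intro the1_equality[OF ex1]) simp
  ultimately show ?thesis by simp
qed

lemma Comp_act:
  assumes "a \<in> fibre x" "b \<in> fibre y" "Dom C x = Cod C y"
    and "\<alpha> \<in> carrier (DM x)" "\<beta> \<in> carrier (DM y)"
  shows "Comp E (act x \<alpha> a) (act y \<beta> b) =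
    act (Comp C x y) (lower_star C DMap x y \<beta> \<oplus>\<^bsub>DM (Comp C x y)\<^esub> upper_star C DMap y x \<alpha>) (Comp E a b)"
  using ext assms fibre_Mor unfolding linear_extension_def fibre_def by blast

lemma DMap_hom:
  "f \<in> Mor C \<Longrightarrow> a \<in> Mor C \<Longrightarrow> b \<in> Mor C \<Longrightarrow> Dom C a = Cod C f \<Longrightarrow> Cod C b = Dom C f \<Longrightarrow>
    DMap a f b \<in> module_hom R (DM f) (DM (Comp C (Comp C a f) b))"
  using natural_DM unfolding natural_system_def by blast

lemma upper_star_zero:
  assumes x: "x \<in> Mor C" and y: "y \<in> Mor C" and xy: "Dom C x = Cod C y"
  shows "upper_star C DMap y x \<zero>\<^bsub>DM x\<^esub> = \<zero>\<^bsub>DM (Comp C x y)\<^esub>"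
proof -
  have id: "Id C (Cod C x) \<in> Mor C" "Dom C (Id C (Cod C x)) = Cod C x" "Comp C (Id C (Cod C x)) x = x"
    using category_C x unfolding is_category_def by auto
  have "upper_star C DMap y x \<in> module_hom R (DM x) (DM (Comp C x y))"
    using DMap_hom[OF x id(1) y id(2) xy[symmetric]] id(3) unfolding upper_star_def by simp
  then show ?thesis using module_hom_zero module_DM x y xy Comp_C_closed by blast
qed

lemma Comp_act_right:
  assumes a: "a \<in> fibre x" and b: "b \<in> fibre y" and xy: "Dom C x = Cod C y" and \<beta>: "\<beta> \<in> carrier (DM y)"
  shows "Comp E a (act y \<beta> b) = act (Comp C x y) (lower_star C DMap x y \<beta>) (Comp E a b)"
proof -
  have x: "x \<in> Mor C" and y: "y \<in> Mor C" using a b fibre_Mor by blast+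
  interpret Mx: module R "DM x" using module_DM x .
  interpret Mxy: module R "DM (Comp C x y)" using module_DM Comp_C_closed x y xy by blast
  have lower: "lower_star C DMap x y \<beta> \<in> carrier (DM (Comp C x y))"
    using lower_star_bij[OF x y xy] \<beta> by (auto dest: bij_betw_apply)
  have "Comp E a (act y \<beta> b) = Comp E (act x \<zero>\<^bsub>DM x\<^esub> a) (act y \<beta> b)"
    by (simp only: act_zero[OF a])
  also have "\<dots> = act (Comp C x y)
      (lower_star C DMap x y \<beta> \<oplus>\<^bsub>DM (Comp C x y)\<^esub> upper_star C DMap y x \<zero>\<^bsub>DM x\<^esub>) (Comp E a b)"
    using Comp_act[OF a b xy Mx.zero_closed \<beta>] .
  also have "\<dots> = act (Comp C x y) (lower_star C DMap x y \<beta>) (Comp E a b)"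
    using upper_star_zero[OF x y xy] lower by simp
  finally show ?thesis .
qed

lemma fibre_eqpoll_carrier:
  assumes x: "x \<in> Mor C"
  shows "fibre x \<approx> carrier (DM x)"
proof -
  obtain e where e: "e \<in> fibre x" using fibre_nonempty[OF x] by blast
  have "bij_betw (\<lambda>\<alpha>. act x \<alpha> e) (carrier (DM x)) (fibre x)"
  proof (rule bij_betw_imageI)
    show "inj_on (\<lambda>\<alpha>. act x \<alpha> e) (carrier (DM x))"
      by (rule inj_onI) (rule act_inj[OF e])
    show "(\<lambda>\<alpha>. act x \<alpha> e) ` carrier (DM x) = fibre x"
    proof
      show "(\<lambda>\<alpha>. act x \<alpha> e) ` carrier (DM x) \<subseteq> fibre x" using act_fibre[OF e] by blast
      show "fibre x \<subseteq> (\<lambda>\<alpha>. act x \<alpha> e) ` carrier (DM x)"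
      proof
        fix e' assume "e' \<in> fibre x"
        then obtain \<alpha> where "\<alpha> \<in> carrier (DM x)" "act x \<alpha> e = e'" by (rule act_transitive[OF e])
        then show "e' \<in> (\<lambda>\<alpha>. act x \<alpha> e) ` carrier (DM x)" by blast
      qed
    qed
  qed
  then show ?thesis using eqpoll_def eqpoll_sym by blast
qed

text \<open>Right factors are unique since x_* is injective, and exist since it is surjective.\<close>

lemma ex1_right_factor:
  assumes a: "a \<in> fibre x" and y: "y \<in> Mor C" and xy: "Dom C x = Cod C y"
    and e: "e \<in> fibre (Comp C x y)"
  shows "\<exists>!b. b \<in> fibre y \<and> Comp E a b = e"
proof -
  have x: "x \<in> Mor C" using a fibre_Mor by blast
  note bij = lower_star_bij[OF x y xy]
  obtain b0 where b0: "b0 \<in> fibre y" using fibre_nonempty[OF y] by blast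
  have ab0: "Comp E a b0 \<in> fibre (Comp C x y)" using Comp_fibre[OF a b0 xy] by blast
  have shift: "Comp E a (act y \<beta> b0) = act (Comp C x y) (lower_star C DMap x y \<beta>) (Comp E a b0)"
    if "\<beta> \<in> carrier (DM y)" for \<beta>
    using Comp_act_right[OF a b0 xy that] .
  obtain \<delta> where \<delta>: "\<delta> \<in> carrier (DM (Comp C x y))" "act (Comp C x y) \<delta> (Comp E a b0) = e"
    using act_transitive[OF ab0 e] .
  have "\<delta> \<in> lower_star C DMap x y ` carrier (DM y)"
    using \<delta>(1) bij_betw_imp_surj_on[OF bij] by simp
  then obtain \<beta> where \<beta>: "\<beta> \<in> carrier (DM y)" "lower_star C DMap x y \<beta> = \<delta>" by blast
  show ?thesis
  proof (rule ex1I)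
    show "act y \<beta> b0 \<in> fibre y \<and> Comp E a (act y \<beta> b0) = e"
      using act_fibre[OF b0 \<beta>(1)] shift[OF \<beta>(1)] \<beta>(2) \<delta>(2) by simp
    fix b assume b: "b \<in> fibre y \<and> Comp E a b = e"
    obtain \<beta>' where \<beta>': "\<beta>' \<in> carrier (DM y)" "act y \<beta>' b0 = b"
      using act_transitive[OF b0] b by blast
    have lower: "lower_star C DMap x y \<beta>' \<in> carrier (DM (Comp C x y))"
      using bij \<beta>'(1) by (rule bij_betw_apply)
    have "act (Comp C x y) (lower_star C DMap x y \<beta>') (Comp E a b0) = act (Comp C x y) \<delta> (Comp E a b0)"
      using shift[OF \<beta>'(1)] b \<beta>'(2) \<delta>(2) by simp
    then have "lower_star C DMap x y \<beta>' = lower_star C DMap x y \<beta>"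
      using act_inj[OF ab0 lower \<delta>(1)] \<beta>(2) by simp
    then have "\<beta>' = \<beta>" using inj_onD[OF bij_betw_imp_inj_on[OF bij] _ \<beta>'(1) \<beta>(1)] by simp
    then show "b = act y \<beta> b0" using \<beta>'(2) by simp
  qed
qed

definition right_factor :: "'e \<Rightarrow> 'm \<Rightarrow> 'e \<Rightarrow> 'e" where
  "right_factor a y e = (THE b. b \<in> fibre y \<and> Comp E a b = e)"

lemma right_factor:
  assumes "(x, y) \<in> factor_pairs C \<sigma> \<tau> (q e)" "a \<in> fibre x" "\<tau> \<subseteq> Mor C" "e \<in> Mor E"
  shows "right_factor a y e \<in> fibre y \<and> Comp E a (right_factor a y e) = e"
    and "b \<in> fibre y \<Longrightarrow> Comp E a b = e \<Longrightarrow> right_factor a y e = b"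
proof -
  have "y \<in> Mor C" "Dom C x = Cod C y" "e \<in> fibre (Comp C x y)"
    using assms unfolding factor_pairs_def fibre_def by auto
  note ex1 = ex1_right_factor[OF assms(2) this]
  show "right_factor a y e \<in> fibre y \<and> Comp E a (right_factor a y e) = e"
    unfolding right_factor_def using theI'[OF ex1] .
  show "b \<in> fibre y \<Longrightarrow> Comp E a b = e \<Longrightarrow> right_factor a y e = b"
    unfolding right_factor_def by (rule the1_equality[OF ex1]) simp
qed

lemma factor_pairs_vimage_bij:
  assumes e: "e \<in> Mor E" and \<sigma>: "\<sigma> \<subseteq> Mor C" and \<tau>: "\<tau> \<subseteq> Mor C"
  shows "bij_betw (\<lambda>(a, b). ((q a, q b), a))
    (factor_pairs E {e \<in> Mor E. q e \<in> \<sigma>} {e \<in> Mor E. q e \<in> \<tau>} e)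
    (SIGMA p:factor_pairs C \<sigma> \<tau> (q e). fibre (fst p))"
proof (rule bij_betw_byWitness[where f' = "\<lambda>((x, y), a). (a, right_factor a y e)"])
  have lift: "((q a, q b), a) \<in> (SIGMA p:factor_pairs C \<sigma> \<tau> (q e). fibre (fst p))"
    if "(a, b) \<in> factor_pairs E {e \<in> Mor E. q e \<in> \<sigma>} {e \<in> Mor E. q e \<in> \<tau>} e" for a b
    using that q_Mor q_Comp unfolding factor_pairs_def fibre_def by auto
  show "\<forall>p\<in>factor_pairs E {e \<in> Mor E. q e \<in> \<sigma>} {e \<in> Mor E. q e \<in> \<tau>} e.
      (\<lambda>((x, y), a). (a, right_factor a y e)) ((\<lambda>(a, b). ((q a, q b), a)) p) = p"
  proof
    fix p assume p: "p \<in> factor_pairs E {e \<in> Mor E. q e \<in> \<sigma>} {e \<in> Mor E. q e \<in> \<tau>} e"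
    obtain a b where ab: "p = (a, b)" by (cases p)
    have "(q a, q b) \<in> factor_pairs C \<sigma> \<tau> (q e)" "a \<in> fibre (q a)"
      using lift p unfolding ab by auto
    moreover have "b \<in> fibre (q b)" "Comp E a b = e"
      using p unfolding ab factor_pairs_def fibre_def by auto
    ultimately have "right_factor a (q b) e = b" using right_factor(2)[OF _ _ \<tau> e] by blast
    then show "(\<lambda>((x, y), a). (a, right_factor a y e)) ((\<lambda>(a, b). ((q a, q b), a)) p) = p"
      unfolding ab by simp
  qed
  show "(\<lambda>(a, b). ((q a, q b), a)) ` factor_pairs E {e \<in> Mor E. q e \<in> \<sigma>} {e \<in> Mor E. q e \<in> \<tau>} e
      \<subseteq> (SIGMA p:factor_pairs C \<sigma> \<tau> (q e). fibre (fst p))"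
    using lift by auto
  show "\<forall>z\<in>SIGMA p:factor_pairs C \<sigma> \<tau> (q e). fibre (fst p).
      (\<lambda>(a, b). ((q a, q b), a)) ((\<lambda>((x, y), a). (a, right_factor a y e)) z) = z"
    using right_factor(1)[OF _ _ \<tau> e] unfolding fibre_def by auto
  show "(\<lambda>((x, y), a). (a, right_factor a y e)) ` (SIGMA p:factor_pairs C \<sigma> \<tau> (q e). fibre (fst p))
      \<subseteq> factor_pairs E {e \<in> Mor E. q e \<in> \<sigma>} {e \<in> Mor E. q e \<in> \<tau>} e"
  proof (rule image_subsetI)
    fix z assume "z \<in> (SIGMA p:factor_pairs C \<sigma> \<tau> (q e). fibre (fst p))"
    then obtain x y a where z: "z = ((x, y), a)"
      and xy: "(x, y) \<in> factor_pairs C \<sigma> \<tau> (q e)" and a: "a \<in> fibre x" by auto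
    note b = right_factor(1)[OF xy a \<tau> e]
    have "Dom C x = Cod C y" using xy unfolding factor_pairs_def by simp
    then show "(\<lambda>((x, y), a). (a, right_factor a y e)) z
        \<in> factor_pairs E {e \<in> Mor E. q e \<in> \<sigma>} {e \<in> Mor E. q e \<in> \<tau>} e"
      using Comp_fibre(1)[OF a] a b xy unfolding z factor_pairs_def fibre_def by auto
  qed
qed

lemma factor_pairs_vimage_eqpoll:
  assumes "e \<in> Mor E" and "\<sigma> \<subseteq> Mor C" and "\<tau> \<subseteq> Mor C"
  shows "factor_pairs E {e \<in> Mor E. q e \<in> \<sigma>} {e \<in> Mor E. q e \<in> \<tau>} e
    \<approx> (SIGMA p:factor_pairs C \<sigma> \<tau> (q e). carrier (DM (fst p)))"
proof -
  have "factor_pairs E {e \<in> Mor E. q e \<in> \<sigma>} {e \<in> Mor E. q e \<in> \<tau>} e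
      \<approx> (SIGMA p:factor_pairs C \<sigma> \<tau> (q e). fibre (fst p))"
    using factor_pairs_vimage_bij[OF assms] unfolding eqpoll_def by blast
  also have "\<dots> \<approx> (SIGMA p:factor_pairs C \<sigma> \<tau> (q e). carrier (DM (fst p)))"
  proof (rule Sigma_eqpoll_cong[OF bij_betw_id])
    fix p assume "p \<in> factor_pairs C \<sigma> \<tau> (q e)"
    then have "fst p \<in> Mor C" using assms(2) unfolding factor_pairs_def by auto
    then show "fibre (fst p) \<approx> carrier (DM (fst (id p)))" using fibre_eqpoll_carrier by simp
  qed
  finally show ?thesis .
qed

lemma carrier_DM_Id_Dom_eqpoll:
  assumes x: "x \<in> Mor C"
  shows "carrier (DM (Id C (Dom C x))) \<approx> carrier (DM x)"
proof -
  have "Id C (Dom C x) \<in> Mor C" "Dom C x = Cod C (Id C (Dom C x))" "Comp C x (Id C (Dom C x)) = x"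
    using category_C x unfolding is_category_def by auto
  then show ?thesis using lower_star_bij[OF x] unfolding eqpoll_def by metis
qed

lemma factor_pairs_vimage_eqpoll_block:
  assumes qs: "quasi_schemoid C S"
    and block_card: "\<And>\<sigma> x x'. \<sigma> \<in> S \<Longrightarrow> x \<in> \<sigma> \<Longrightarrow> x' \<in> \<sigma> \<Longrightarrow> carrier (DM x) \<approx> carrier (DM x')"
    and \<sigma>: "\<sigma> \<in> S" and \<tau>: "\<tau> \<in> S" and \<mu>: "\<mu> \<in> S"
    and f: "f \<in> Mor E" "q f \<in> \<mu>" and g: "g \<in> Mor E" "q g \<in> \<mu>"
  shows "factor_pairs E {e \<in> Mor E. q e \<in> \<sigma>} {e \<in> Mor E. q e \<in> \<tau>} f
    \<approx> factor_pairs E {e \<in> Mor E. q e \<in> \<sigma>} {e \<in> Mor E. q e \<in> \<tau>} g"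
proof -
  have "partition_on (Mor C) S" using qs unfolding quasi_schemoid_def by blast
  then have sub: "\<sigma> \<subseteq> Mor C" "\<tau> \<subseteq> Mor C" using partition_onD1 \<sigma> \<tau> by blast+
  have "factor_pairs C \<sigma> \<tau> (q f) \<approx> factor_pairs C \<sigma> \<tau> (q g)"
    using qs \<sigma> \<tau> \<mu> f(2) g(2) unfolding quasi_schemoid_def by blast
  then obtain h where h: "bij_betw h (factor_pairs C \<sigma> \<tau> (q f)) (factor_pairs C \<sigma> \<tau> (q g))"
    unfolding eqpoll_def by blast
  note factor_pairs_vimage_eqpoll[OF f(1) sub]
  also have "(SIGMA p:factor_pairs C \<sigma> \<tau> (q f). carrier (DM (fst p)))
      \<approx> (SIGMA p:factor_pairs C \<sigma> \<tau> (q g). carrier (DM (fst p)))"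
  proof (rule Sigma_eqpoll_cong[OF h])
    fix p assume p: "p \<in> factor_pairs C \<sigma> \<tau> (q f)"
    then have "fst p \<in> \<sigma>" "fst (h p) \<in> \<sigma>"
      using bij_betw_apply[OF h p] unfolding factor_pairs_def by auto
    then show "carrier (DM (fst p)) \<approx> carrier (DM (fst (h p)))" using block_card \<sigma> by blast
  qed
  also note eqpoll_sym[OF factor_pairs_vimage_eqpoll[OF g(1) sub]]
  finally show ?thesis .
qed

lemma quasi_schemoid_vimage_blocks:
  assumes qs: "quasi_schemoid C S"
    and block_card: "\<And>\<sigma> x x'. \<sigma> \<in> S \<Longrightarrow> x \<in> \<sigma> \<Longrightarrow> x' \<in> \<sigma> \<Longrightarrow> carrier (DM x) \<approx> carrier (DM x')"
  shows "quasi_schemoid E (vimage_blocks q (Mor E) S)"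
  unfolding quasi_schemoid_def
proof (intro conjI ballI)
  show "is_category E" by (rule category_E)
  show "partition_on (Mor E) (vimage_blocks q (Mor E) S)"
    using partition_on_vimage_blocks[OF _ q_image] qs unfolding quasi_schemoid_def by blast
  fix A B M f g
  assume "A \<in> vimage_blocks q (Mor E) S" "B \<in> vimage_blocks q (Mor E) S" "M \<in> vimage_blocks q (Mor E) S"
    and "f \<in> M" "g \<in> M"
  then obtain \<sigma> \<tau> \<mu> where "\<sigma> \<in> S" "A = {e \<in> Mor E. q e \<in> \<sigma>}"
    and "\<tau> \<in> S" "B = {e \<in> Mor E. q e \<in> \<tau>}" and "\<mu> \<in> S"
    and "f \<in> Mor E" "q f \<in> \<mu>" and "g \<in> Mor E" "q g \<in> \<mu>"
    unfolding vimage_blocks_def by auto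
  then show "factor_pairs E A B f \<approx> factor_pairs E A B g"
    using factor_pairs_vimage_eqpoll_block[OF qs block_card] by simp
qed

end

theorem proposition5p2:
  fixes C :: "('o, 'm) cat" and E :: "('o, 'e) cat"
    and R :: "('k, 'c) ring_scheme"
    and DM :: "'m \<Rightarrow> ('k, 'v) module" and DMap :: "'m \<Rightarrow> 'm \<Rightarrow> 'm \<Rightarrow> 'v \<Rightarrow> 'v"
    and q :: "'e \<Rightarrow> 'm" and act :: "'m \<Rightarrow> 'v \<Rightarrow> 'e \<Rightarrow> 'e"
    and S :: "'m set set"
  assumes ext: "linear_extension C R DM DMap E q act"
    and qs: "quasi_schemoid C S"
    and lower_inv: "\<And>f g. f \<in> Mor C \<Longrightarrow> g \<in> Mor C \<Longrightarrow> Dom C f = Cod C g \<Longrightarrow>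
        lower_star C DMap f g \<in> module_iso R (DM g) (DM (Comp C f g))"
    and upper_inv: "\<And>f h. f \<in> Mor C \<Longrightarrow> h \<in> Mor C \<Longrightarrow> Dom C h = Cod C f \<Longrightarrow>
        upper_star C DMap f h \<in> module_iso R (DM h) (DM (Comp C h f))"
    and block_iso: "\<And>\<sigma> f g. \<sigma> \<in> S \<Longrightarrow> f \<in> \<sigma> \<Longrightarrow> g \<in> \<sigma> \<Longrightarrow>
        is_module_iso R (DM (Id C (Dom C f))) (DM (Id C (Dom C g)))"
  shows "(\<exists>!S'. qs_morphism E S' C S q \<and> inj_on (induced_block_map S q) S') \<and>
         (let T = {{e \<in> Mor E. q e \<in> \<sigma>} | \<sigma>. \<sigma> \<in> S}
          in qs_morphism E T C S q \<and> inj_on (induced_block_map S q) T)"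
proof -
  interpret linear_extension_bij_lower C E R DM DMap q act
    using ext lower_inv by unfold_locales (auto simp: module_iso_def)
  have partC: "partition_on (Mor C) S" using qs unfolding quasi_schemoid_def by blast
  have block_card: "carrier (DM x) \<approx> carrier (DM x')" if "\<sigma> \<in> S" "x \<in> \<sigma>" "x' \<in> \<sigma>" for \<sigma> x x'
  proof -
    have "x \<in> Mor C" "x' \<in> Mor C" using that partition_onD1[OF partC] by auto
    moreover have "carrier (DM (Id C (Dom C x))) \<approx> carrier (DM (Id C (Dom C x')))"
      using block_iso[OF that] module_iso_eqpoll unfolding is_module_iso_def by blast
    ultimately show ?thesis
      using carrier_DM_Id_Dom_eqpoll eqpoll_sym eqpoll_trans by metis
  qed
  let ?T = "vimage_blocks q (Mor E) S"
  have morphism: "qs_morphism E ?T C S q"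
    unfolding qs_morphism_def using quasi_schemoid_vimage_blocks[OF qs block_card] qs functor_q
    by (auto simp: vimage_blocks_def)
  have inj: "inj_on (induced_block_map S q) ?T"
    by (rule inj_on_induced_block_map_vimage_blocks[OF partC q_image])
  have unique: "S' = ?T" if "qs_morphism E S' C S q" "inj_on (induced_block_map S q) S'" for S'
    using vimage_blocks_unique[OF partC q_image _ _ that(2)] that(1)
    unfolding qs_morphism_def quasi_schemoid_def by blast
  show ?thesis
    unfolding Let_def vimage_blocks_def[symmetric] using morphism inj unique by blast
qed

end
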